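(* Let $p$ be a prime. (1) For natural numbers $m,n$: there exist integers $r,s\ge1$ and $\ell\in\mathbb{Z}$ with $m=p^r$, $n=p^s$ and $n-m=p^\ell(m-1)$ if and only if $m=p^r$ for some $r\geq1$ and $n=m^2$. (2) For integers $m,n$: there exist integers $r,s\geq1$, $\ell\in\mathbb{Z}$ and signs $\rho,\sigma,\lambda\in\{-1,1\}$ with $m=\rho p^r$, $n=\sigma p^s$ and $n-m=\lambda p^\ell(m-1)$ if and only if $m,n\in\{\pm p^h: h\geq1\}$ and either $n=m^2$, or $p=2$ and $(m,n)\in\{(-2,-8),(2,-2),(4,-2),(4,-8)\}$, or $p=3$ and $(m,n)=(3,-3)$. Equivalently, writing $\bar\theta(m,n)$ for the formula $P_0(m)\wedge P_0(n)\wedge R(m-1,n-m)$: in $\mathfrak{N}_p$ (with $P_0(n)$ being $R(1,n)\wedge n\geq 2$) it defines $\{(p^h,p^{2h}):h\geq1\}$, and in $\mathfrak{D}_p$ (with $P_0(n)$ being $R(1,n)\wedge T(n)$) it defines the set described in (2).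
   Context: For a prime $p$, $x\mid_p y$ (on $\mathbb{Z}$ or $\mathbb{N}$) means $y=\pm xp^s$ for some $s\in\mathbb{Z}$. $\mathfrak{N}_p=(\mathbb{N};0,1,+,\mid_p)$ with $R$ interpreted as $\mid_p$; $\mathfrak{D}_p=(\mathbb{Z};0,1,+,\mid,\mid_p,\mathbb{Z}\smallsetminus\{-1,0,1\})$ with $R$ interpreted as $\mid_p$ and $T$ as $\mathbb{Z}\smallsetminus\{-1,0,1\}$. The expressions $m-1$, $n-m$ are read as integer subtraction. *)

theory Defs
  imports Complex_Main "HOL-Computational_Algebra.Primes"
begin

end

theory Submission
  imports Defs
begin

text \<open>
  Write \<open>m = \<rho> P^r\<close> and \<open>n = \<sigma> P^s\<close>. Since \<open>P\<close> divides \<open>m\<close> but not \<open>m - 1\<close>, the relation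
  \<open>n - m = \<lambda> P^l (m - 1)\<close> forces \<open>l \<ge> 0\<close>, and \<open>P^l\<close> must be exactly the power of \<open>P\<close>
  dividing \<open>n - m\<close>: \<open>P^min(r, s)\<close>, or \<open>2^(r+1)\<close> when \<open>P = 2\<close> and \<open>r = s\<close>. Cancelling it
  leaves an equation between small multiples of \<open>P^|r - s|\<close> and \<open>P^r\<close>. For \<open>r < s\<close> and
  \<open>\<lambda> = \<rho>\<close> it reads \<open>\<sigma> P^(s-r) = P^r\<close>, i.e. \<open>n = m^2\<close>; in every other case comparing sizes
  leaves only the listed sporadic solutions, all with \<open>P \<le> 3\<close>.
\<close>

lemma power_mult_not_dvd_unique:
  fixes P X Y :: "'a::idom"
  assumes "P \<noteq> 0" "\<not> P dvd X" "\<not> P dvd Y" "P ^ a * X = P ^ b * Y"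
  shows "a = b \<and> X = Y"
proof -
  have exponent_not_less: "\<not> i < j" if "P ^ i * U = P ^ j * V" "\<not> P dvd U" for i j and U V :: 'a
  proof
    assume "i < j"
    then have "P ^ i * U = P ^ i * (P ^ (j - i) * V)"
      using that(1) by (simp add: mult.assoc flip: power_add)
    then have "U = P ^ (j - i) * V" using assms(1) by simp
    with \<open>i < j\<close> have "P dvd U" by simp
    with that(2) show False ..
  qed
  have "a = b" using exponent_not_less[of a X b Y] exponent_not_less[of b Y a X] assms(2-4) by auto
  with assms(1,4) show ?thesis by simp
qed

lemma of_int_eq_powi_mult_imp_power_mult:
  fixes P a b l :: int
  assumes "P \<noteq> 0" "P dvd a" "\<not> P dvd b"
    and eq: "real_of_int a = real_of_int P powi l * real_of_int b"
  shows "l \<ge> 0 \<and> a = P ^ nat l * b"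
proof (cases "l \<ge> 0")
  case True
  then have "real_of_int a = real_of_int (P ^ nat l * b)"
    using eq by (simp add: power_int_def)
  with True show ?thesis by (simp only: of_int_eq_iff)
next
  case False
  then obtain j where j: "l = - int j" by (intro that[of "nat (- l)"]) simp
  with eq assms(1) have "real_of_int (a * P ^ j) = real_of_int b"
    by (simp add: power_int_minus field_simps)
  then have "a * P ^ j = b" by (simp only: of_int_eq_iff)
  then have "P dvd b" using assms(2) by (metis dvd_mult2)
  with assms(3) show ?thesis by contradiction
qed

lemma power_diff_eq_twice_unit:
  fixes P u :: int
  assumes P: "P \<ge> 2" and a: "a \<ge> 1" and b: "b \<ge> 1" and u: "u \<in> {-1, 1}"
    and eq: "P ^ a - P ^ b = 2 * u"
  shows "P = 2 \<and> (a = 1 \<and> b = 2 \<and> u = -1 \<or> a = 2 \<and> b = 1 \<and> u = 1)"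
proof -
  have "P dvd P ^ a - P ^ b" using a b by (simp add: dvd_diff)
  with eq u have "P dvd 2" by auto
  with P have P2: "P = 2" using zdvd_imp_le[of P 2] by simp
  have "a = 1 \<or> b = 1"
  proof (rule ccontr)
    assume "\<not> (a = 1 \<or> b = 1)"
    with a b have "(4::int) dvd 2 ^ a" "(4::int) dvd 2 ^ b"
      using le_imp_power_dvd[of 2 a "2::int"] le_imp_power_dvd[of 2 b "2::int"] by simp_all
    with eq P2 have "(4::int) dvd 2 * u" by (metis dvd_diff)
    with u show False by auto
  qed
  moreover have "(2::int) ^ a \<ge> 2" "(2::int) ^ b \<ge> 2"
    using a b self_le_power[of "2::int"] by auto
  ultimately have "a = 1 \<and> (2::int) ^ b = 2 ^ 2 \<and> u = -1 \<or> b = 1 \<and> (2::int) ^ a = 2 ^ 2 \<and> u = 1"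
    using eq u P2 by auto
  with P2 show ?thesis using power_inject_exp[of "2::int" _ 2] by auto
qed

locale signed_power_pair =
  fixes P m n rho sigma :: int and r s :: nat
  assumes base: "P \<ge> 2" and r_pos: "r \<ge> 1" and s_pos: "s \<ge> 1"
    and rho: "rho \<in> {-1, 1}" and sigma: "sigma \<in> {-1, 1}"
    and m_eq: "m = rho * P ^ r" and n_eq: "n = sigma * P ^ s"
begin

lemma not_dvd_unit: "u \<in> {-1, 1} \<Longrightarrow> \<not> P dvd u"
  using base by auto

lemma base_le_power: "i \<ge> 1 \<Longrightarrow> P \<le> P ^ i"
  using base self_le_power[of P i] by simp

lemma not_dvd_m_minus_1: "\<not> P dvd m - 1"
  using dvd_diff_right_iff[of P m 1] not_dvd_unit[of 1] m_eq r_pos by simp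

end

locale signed_power_relation = signed_power_pair +
  fixes lam :: int and k :: nat
  assumes lam: "lam \<in> {-1, 1}"
    and relation: "n - m = lam * P ^ k * (m - 1)"
begin

text \<open>\<open>P^k\<close> is the exact power of \<open>P\<close> dividing \<open>n - m\<close>, as \<open>P\<close> does not divide \<open>\<lambda> (m - 1)\<close>.\<close>

lemma relation_cancel:
  assumes "\<not> P dvd X" "n - m = P ^ j * X"
  shows "j = k \<and> X = lam * (m - 1)"
proof (rule power_mult_not_dvd_unique)
  show "\<not> P dvd lam * (m - 1)" using lam not_dvd_m_minus_1 by (auto simp: dvd_diff_commute)
  show "P ^ j * X = P ^ k * (lam * (m - 1))" using assms(2) relation by (simp add: ac_simps)
qed (use base assms(1) in simp_all)

lemma solutions_less:
  assumes "r < s"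
  shows "n = m\<^sup>2 \<or> P = 2 \<and> (m, n) \<in> {(-2, -8), (4, -8)}"
proof -
  define t where "t = s - r"
  have t: "t \<ge> 1" "s = r + t" using assms by (auto simp: t_def)
  have "n - m = P ^ r * (sigma * P ^ t - rho)"
    using m_eq n_eq t(2) by (simp add: power_add algebra_simps)
  moreover have "\<not> P dvd sigma * P ^ t - rho"
    using dvd_diff_right_iff[of P "sigma * P ^ t" rho] not_dvd_unit rho t(1) by simp
  ultimately have key: "sigma * P ^ t - rho = lam * (rho * P ^ r - 1)"
    using relation_cancel m_eq by blast
  have pow_ge: "P ^ r \<ge> 2" "P ^ t \<ge> 2" using base_le_power r_pos t(1) base by force+
  consider "lam = rho" | "lam = - rho" using rho lam by auto
  then show ?thesis
  proof cases
    case 1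
    with key rho have "sigma * P ^ t = P ^ r" by auto
    with sigma pow_ge have "sigma = 1" "P ^ t = P ^ r" by auto
    then have "n = (P ^ r)\<^sup>2" using n_eq t(2) base by (simp add: power2_eq_square power_add)
    moreover have "m\<^sup>2 = (P ^ r)\<^sup>2" using m_eq rho by auto
    ultimately show ?thesis by simp
  next
    case 2
    with key rho have "sigma * P ^ t + P ^ r = 2 * rho" by auto
    with sigma rho pow_ge have "sigma = -1" "P ^ r - P ^ t = 2 * rho" by auto
    with power_diff_eq_twice_unit[OF base r_pos t(1) rho] show ?thesis
      using m_eq n_eq t(2) by auto
  qed
qed

lemma solutions_greater:
  assumes "s < r"
  shows "P = 2 \<and> (m, n) = (4, -2)"
proof -
  define t where "t = r - s"
  have t: "t \<ge> 1" "r = s + t" using assms by (auto simp: t_def)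
  define A B where "A = P ^ s" and "B = P ^ t"
  have AB: "A \<ge> P" "B \<ge> P" using base_le_power s_pos t(1) by (auto simp: A_def B_def)
  have m_AB: "m = rho * (A * B)" using m_eq t(2) by (simp add: A_def B_def power_add)
  have "n - m = P ^ s * (sigma - rho * P ^ t)"
    using m_eq n_eq t(2) by (simp add: power_add algebra_simps)
  moreover have "\<not> P dvd sigma - rho * P ^ t"
    using dvd_diff_left_iff[of P "rho * P ^ t" sigma] not_dvd_unit sigma t(1) by simp
  ultimately have key: "sigma - rho * B = lam * (rho * (A * B) - 1)"
    using relation_cancel m_AB by (auto simp: B_def)
  \<comment> \<open>\<open>key\<close> says \<open>\<sigma> + \<lambda> = \<rho> B (1 + \<lambda> A)\<close>; the left side has size at most 2, the right
    side at least \<open>B (A - 1) \<ge> 2\<close>, with equality only for \<open>A = B = 2\<close>\<close>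
  define C where "C = A * B"
  have "C \<ge> 2 * B" using AB base by (simp add: C_def mult_right_mono)
  with key rho sigma lam AB base have signs: "rho = 1" "sigma = -1" "B = 2" "C = 4"
    by (auto simp: C_def[symmetric])
  then have "A = 2" by (simp add: C_def)
  with AB signs base have "P = 2" by simp
  with \<open>A = 2\<close> \<open>B = 2\<close> have "s = 1" "t = 1"
    using power_inject_exp[of P _ 1] by (auto simp: A_def B_def)
  with signs m_AB n_eq \<open>A = 2\<close> \<open>P = 2\<close> show ?thesis by simp
qed

lemma solutions_equal:
  assumes "r = s"
  shows "P = 2 \<and> (m, n) = (2, -2) \<or> P = 3 \<and> (m, n) = (3, -3)"
proof -
  have "sigma \<noteq> rho"
  proof
    assume "sigma = rho"
    with relation m_eq n_eq assms base lam have "m - 1 = 0" by auto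
    with not_dvd_m_minus_1 show False by simp
  qed
  with rho sigma have "sigma = - rho" by auto
  then have diff: "n - m = P ^ r * (- 2 * rho)" using m_eq n_eq assms by (simp add: algebra_simps)
  have pow_ge: "P ^ r \<ge> P" using base_le_power r_pos .
  show ?thesis
  proof (cases "P = 2")
    case True
    \<comment> \<open>the factor 2 of \<open>n - m\<close> belongs to its power part\<close>
    with diff have "n - m = P ^ (r + 1) * (- rho)" by (simp add: algebra_simps)
    moreover have "\<not> P dvd - rho" using not_dvd_unit rho by auto
    ultimately have "- rho = lam * (rho * P ^ r - 1)" using relation_cancel m_eq by blast
    with rho lam pow_ge True have "rho = 1" "P ^ r = P" by auto
    then show ?thesis using power_inject_exp[of P r 1] True m_eq n_eq assms \<open>sigma = - rho\<close> by simp
  next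
    case False
    with base have "\<not> P dvd - 2 * rho" using rho zdvd_imp_le[of P 2] by auto
    with diff have "- 2 * rho = lam * (rho * P ^ r - 1)" using relation_cancel m_eq by blast
    with rho lam pow_ge base have "rho = 1" "P ^ r = 3" by auto
    with pow_ge False base have "P = 3" "P ^ r = P" by auto
    then show ?thesis using power_inject_exp[of P r 1] m_eq n_eq assms \<open>sigma = - rho\<close> \<open>rho = 1\<close> by simp
  qed
qed

lemma solutions:
  "n = m\<^sup>2 \<or> P = 2 \<and> (m, n) \<in> {(-2, -8), (2, -2), (4, -2), (4, -8)} \<or> P = 3 \<and> (m, n) = (3, -3)"
  using solutions_less solutions_greater solutions_equal by (cases r s rule: linorder_cases) auto

end

lemma (in signed_power_pair) solutions_of_real_relation:
  assumes lam: "lam \<in> {-1, 1}"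
    and eq: "real_of_int (n - m) = real_of_int lam * real_of_int P powi l * real_of_int (m - 1)"
  shows "n = m\<^sup>2 \<or> P = 2 \<and> (m, n) \<in> {(-2, -8), (2, -2), (4, -2), (4, -8)} \<or> P = 3 \<and> (m, n) = (3, -3)"
proof -
  have "P dvd n - m" using m_eq n_eq r_pos s_pos by simp
  moreover have "\<not> P dvd lam * (m - 1)"
    using lam not_dvd_m_minus_1 by (auto simp: dvd_diff_commute)
  moreover have "real_of_int (n - m) = real_of_int P powi l * real_of_int (lam * (m - 1))"
    using eq by simp
  ultimately have "l \<ge> 0 \<and> n - m = P ^ nat l * (lam * (m - 1))"
    using base by (intro of_int_eq_powi_mult_imp_power_mult) auto
  then have "n - m = lam * P ^ nat l * (m - 1)" by (simp add: ac_simps)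
  then interpret signed_power_relation P m n rho sigma r s lam "nat l"
    using lam by unfold_locales
  show ?thesis by (rule solutions)
qed

lemma real_relation_witness:
  fixes p :: nat and m n rho sigma lam :: int and r s l :: nat
  assumes "r \<ge> 1" "s \<ge> 1" "rho \<in> {-1, 1}" "sigma \<in> {-1, 1}" "lam \<in> {-1, 1}"
    and "m = rho * int p ^ r" "n = sigma * int p ^ s" "n - m = lam * int p ^ l * (m - 1)"
  shows "\<exists>r s :: nat. \<exists>l :: int. \<exists>rho sigma lam :: int.
           r \<ge> 1 \<and> s \<ge> 1 \<and> rho \<in> {-1, 1} \<and> sigma \<in> {-1, 1} \<and> lam \<in> {-1, 1} \<and>
           m = rho * int p ^ r \<and> n = sigma * int p ^ s \<and>
           real_of_int (n - m) = real_of_int lam * real p powi l * real_of_int (m - 1)"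
proof -
  have "real_of_int (n - m) = real_of_int lam * real p powi int l * real_of_int (m - 1)"
    using assms(8) by (simp del: of_int_diff)
  with assms show ?thesis by blast
qed

abbreviation signed_powers :: "int \<Rightarrow> int set" where
  "signed_powers P \<equiv> {x. \<exists>h :: nat. h \<ge> 1 \<and> (x = P ^ h \<or> x = - (P ^ h))}"

lemma signed_power_relation_iff:
  fixes p :: nat and m n :: int
  assumes "p \<ge> 2"
  shows "(\<exists>r s :: nat. \<exists>l :: int. \<exists>rho sigma lam :: int.
           r \<ge> 1 \<and> s \<ge> 1 \<and> rho \<in> {-1, 1} \<and> sigma \<in> {-1, 1} \<and> lam \<in> {-1, 1} \<and>
           m = rho * int p ^ r \<and> n = sigma * int p ^ s \<and>
           real_of_int (n - m) = real_of_int lam * real p powi l * real_of_int (m - 1))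
    \<longleftrightarrow> m \<in> signed_powers (int p) \<and> n \<in> signed_powers (int p) \<and>
        (n = m\<^sup>2 \<or> p = 2 \<and> (m, n) \<in> {(-2, -8), (2, -2), (4, -2), (4, -8)} \<or> p = 3 \<and> (m, n) = (3, -3))"
    (is "?relation \<longleftrightarrow> _ \<and> _ \<and> ?solution")
proof
  assume ?relation
  then obtain r s l rho sigma lam where
    "r \<ge> 1" "s \<ge> 1" "rho \<in> {-1, 1}" "sigma \<in> {-1, 1}" and lam: "lam \<in> {-1, 1}"
    and "m = rho * int p ^ r" "n = sigma * int p ^ s"
    and "real_of_int (n - m) = real_of_int lam * real p powi l * real_of_int (m - 1)"
    by blast
  moreover from this have eq:
    "real_of_int (n - m) = real_of_int lam * real_of_int (int p) powi l * real_of_int (m - 1)"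
    by simp
  ultimately interpret signed_power_pair "int p" m n rho sigma r s
    using assms by unfold_locales auto
  have ?solution using solutions_of_real_relation[OF lam eq] by auto
  moreover have "m \<in> signed_powers (int p)" "n \<in> signed_powers (int p)"
    using m_eq n_eq rho sigma r_pos s_pos by auto
  ultimately show "m \<in> signed_powers (int p) \<and> n \<in> signed_powers (int p) \<and> ?solution" by blast
next
  assume "m \<in> signed_powers (int p) \<and> n \<in> signed_powers (int p) \<and> ?solution"
  then obtain h rho where h: "h \<ge> 1" "rho \<in> {-1, 1}" "m = rho * int p ^ h" and ?solution
    by force
  from \<open>?solution\<close> show ?relation
  proof (elim disjE conjE insertE emptyE)
    assume "n = m\<^sup>2"
    then have "n = 1 * int p ^ (2 * h)" "n - m = rho * int p ^ h * (m - 1)"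
      using h by (auto simp: power_mult power2_eq_square algebra_simps)
    with h show ?relation
      by (intro real_relation_witness[where r = h and s = "2 * h" and l = h and rho = rho and sigma = 1 and lam = rho]) simp_all
  next
    assume "p = 2" "(m, n) = (-2, -8)"
    then show ?relation by (intro real_relation_witness[where r = 1 and s = 3 and l = 1]) auto
  next
    assume "p = 2" "(m, n) = (2, -2)"
    then show ?relation by (intro real_relation_witness[where r = 1 and s = 1 and l = 2]) auto
  next
    assume "p = 2" "(m, n) = (4, -2)"
    then show ?relation by (intro real_relation_witness[where r = 2 and s = 1 and l = 1]) auto
  next
    assume "p = 2" "(m, n) = (4, -8)"
    then show ?relation by (intro real_relation_witness[where r = 2 and s = 3 and l = 2]) auto
  next
    assume "p = 3" "(m, n) = (3, -3)"
    then show ?relation by (intro real_relation_witness[where r = 1 and s = 1 and l = 1]) auto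
  qed
qed

lemma power_relation_iff:
  fixes p m n :: nat
  assumes "p \<ge> 2"
  shows "(\<exists>r s :: nat. \<exists>l :: int. r \<ge> 1 \<and> s \<ge> 1 \<and> m = p ^ r \<and> n = p ^ s \<and>
           real_of_int (int n - int m) = real p powi l * real_of_int (int m - 1))
    \<longleftrightarrow> (\<exists>r :: nat. r \<ge> 1 \<and> m = p ^ r) \<and> n = m\<^sup>2"
proof
  assume "\<exists>r s :: nat. \<exists>l :: int. r \<ge> 1 \<and> s \<ge> 1 \<and> m = p ^ r \<and> n = p ^ s \<and>
           real_of_int (int n - int m) = real p powi l * real_of_int (int m - 1)"
  then obtain r s l where "r \<ge> 1" "s \<ge> 1" "m = p ^ r" "n = p ^ s"
    and eq: "real_of_int (int n - int m) = real p powi l * real_of_int (int m - 1)"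
    by blast
  moreover from this interpret signed_power_pair "int p" "int m" "int n" 1 1 r s
    using assms by unfold_locales auto
  have "real_of_int (int n - int m)
      = real_of_int 1 * real_of_int (int p) powi l * real_of_int (int m - 1)"
    using eq by simp
  then have "int n = (int m)\<^sup>2 \<or> int n < 0"
    using solutions_of_real_relation[of 1] by auto
  then have "n = m\<^sup>2" by (simp flip: of_nat_power)
  ultimately show "(\<exists>r :: nat. r \<ge> 1 \<and> m = p ^ r) \<and> n = m\<^sup>2" by blast
next
  assume "(\<exists>r :: nat. r \<ge> 1 \<and> m = p ^ r) \<and> n = m\<^sup>2"
  then obtain r where "r \<ge> 1" "m = p ^ r" "n = p ^ (2 * r)"
    by (auto simp: power_mult mult.commute)
  moreover have "2 * r \<ge> 1" using calculation by simp
  moreover have "real_of_int (int n - int m) = real p powi int r * real_of_int (int m - 1)"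
    using calculation by (simp add: power_mult power2_eq_square algebra_simps)
  ultimately show "\<exists>r s :: nat. \<exists>l :: int. r \<ge> 1 \<and> s \<ge> 1 \<and> m = p ^ r \<and> n = p ^ s \<and>
           real_of_int (int n - int m) = real p powi l * real_of_int (int m - 1)"
    by blast
qed

theorem lemma4p4:
  fixes p :: nat
  assumes "prime p"
  shows "(\<forall>m n :: nat.
           (\<exists>r s :: nat. \<exists>l :: int. r \<ge> 1 \<and> s \<ge> 1 \<and> m = p ^ r \<and> n = p ^ s \<and>
              real_of_int (int n - int m) = real p powi l * real_of_int (int m - 1))
           \<longleftrightarrow> ((\<exists>r :: nat. r \<ge> 1 \<and> m = p ^ r) \<and> n = m ^ 2))
     \<and> (\<forall>m n :: int.
           (\<exists>r s :: nat. \<exists>l :: int. \<exists>rho sigma lam :: int.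
              r \<ge> 1 \<and> s \<ge> 1 \<and> rho \<in> {-1, 1} \<and> sigma \<in> {-1, 1} \<and> lam \<in> {-1, 1} \<and>
              m = rho * int p ^ r \<and> n = sigma * int p ^ s \<and>
              real_of_int (n - m) = real_of_int lam * real p powi l * real_of_int (m - 1))
           \<longleftrightarrow> (m \<in> {x. \<exists>h :: nat. h \<ge> 1 \<and> (x = int p ^ h \<or> x = - (int p ^ h))} \<and>
                n \<in> {x. \<exists>h :: nat. h \<ge> 1 \<and> (x = int p ^ h \<or> x = - (int p ^ h))} \<and>
                (n = m ^ 2 \<or>
                 (p = 2 \<and> (m, n) \<in> {(-2, -8), (2, -2), (4, -2), (4, -8)}) \<or>
                 (p = 3 \<and> (m, n) = (3, -3)))))"
proof -
  have "p \<ge> 2" using assms by (rule prime_ge_2_nat)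
  show ?thesis
    by (intro conjI allI power_relation_iff[OF \<open>p \<ge> 2\<close>] signed_power_relation_iff[OF \<open>p \<ge> 2\<close>])
qed

end
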